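(* Let $G$ be a finite, connected, simple, bridgeless, triangle-free cubic graph. Then the reduced order two line graph $\mathfrak{L}_2(G)$ is $4$-regular and connected.
   Context: For a simple graph $H$, the line graph $\mathcal{L}(H)$ has the edges of $H$ as vertices, two of them adjacent iff they share an endpoint. For every triangle $T$ (3-cycle) of $\mathcal{L}(G)$, its three edges are pairwise adjacent in $\mathcal{L}(\mathcal{L}(G))$ and form a triangle $\mathcal{L}(T)$ there; let $\mathcal{T}$ be the set of all triangles $\mathcal{L}(T)$, $T$ ranging over triangles of $\mathcal{L}(G)$. The reduced order two line graph $\mathfrak{L}_2(G)$ is the graph with the same vertex set as $\mathcal{L}(\mathcal{L}(G))$ and whose edges are the edges of $\mathcal{L}(\mathcal{L}(G))$ not belonging to any triangle in $\mathcal{T}$. *)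

theory Defs
  imports Main
begin

definition simple_graph :: "'a set \<Rightarrow> 'a set set \<Rightarrow> bool" where
  "simple_graph V E \<longleftrightarrow> finite V \<and> (\<forall>e\<in>E. e \<subseteq> V \<and> card e = 2)"

definition degree :: "'a set set \<Rightarrow> 'a \<Rightarrow> nat" where
  "degree E v = card {e \<in> E. v \<in> e}"

definition regular :: "nat \<Rightarrow> 'a set \<Rightarrow> 'a set set \<Rightarrow> bool" where
  "regular k V E \<longleftrightarrow> (\<forall>v\<in>V. degree E v = k)"

definition adj :: "'a set set \<Rightarrow> 'a \<Rightarrow> 'a \<Rightarrow> bool" where
  "adj E u v \<longleftrightarrow> {u, v} \<in> E"

definition reachable :: "'a set set \<Rightarrow> 'a \<Rightarrow> 'a \<Rightarrow> bool" where
  "reachable E u v \<longleftrightarrow> (adj E)\<^sup>*\<^sup>* u v"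

definition connected_graph :: "'a set \<Rightarrow> 'a set set \<Rightarrow> bool" where
  "connected_graph V E \<longleftrightarrow> V \<noteq> {} \<and> (\<forall>u\<in>V. \<forall>v\<in>V. reachable E u v)"

definition is_bridge :: "'a set \<Rightarrow> 'a set set \<Rightarrow> 'a set \<Rightarrow> bool" where
  "is_bridge V E e \<longleftrightarrow> e \<in> E \<and>
     (\<exists>u\<in>V. \<exists>v\<in>V. reachable E u v \<and> \<not> reachable (E - {e}) u v)"

definition bridgeless :: "'a set \<Rightarrow> 'a set set \<Rightarrow> bool" where
  "bridgeless V E \<longleftrightarrow> (\<forall>e. \<not> is_bridge V E e)"

definition triangles :: "'a set set \<Rightarrow> 'a set set" where
  "triangles E = {{a, b, c} | a b c. a \<noteq> b \<and> b \<noteq> c \<and> a \<noteq> c \<and>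
                     {a, b} \<in> E \<and> {b, c} \<in> E \<and> {a, c} \<in> E}"

definition triangle_free :: "'a set set \<Rightarrow> bool" where
  "triangle_free E \<longleftrightarrow> triangles E = {}"

definition line_edges :: "'a set set \<Rightarrow> 'a set set set" where
  "line_edges E = {{e, f} | e f. e \<in> E \<and> f \<in> E \<and> e \<noteq> f \<and> e \<inter> f \<noteq> {}}"

definition set_edges :: "'a set \<Rightarrow> 'a set set" where
  "set_edges S = {{x, y} | x y. x \<in> S \<and> y \<in> S \<and> x \<noteq> y}"

text \<open>For a triangle T of L(G), the triangle L(T) in L(L(G)) has vertex set the
  three edges of T, hence edge set set_edges (set_edges T).\<close>
definition reduced_L2_vertices :: "'a set set \<Rightarrow> 'a set set set" where
  "reduced_L2_vertices E = line_edges E"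

definition reduced_L2_edges :: "'a set set \<Rightarrow> 'a set set set set" where
  "reduced_L2_edges E = line_edges (line_edges E) -
     (\<Union>T\<in>triangles (line_edges E). set_edges (set_edges T))"

end

theory Submission imports Defs begin

(* An edge
  {{a, b}, {b, c}} of L(L(G)) lies in a triangle L(T) exactly when a and c meet, since then
  a, b, c form a triangle T of L(G); so the neighbours of {a, b} correspond to the edges c
  that meet b but not a, and those that meet a but not b. If a = uv and b = vw in a cubic
  triangle-free graph, the first kind are the two further edges at w and the second the two
  further edges at u: degree 4.
  For connectivity, two pairs of edges at a common vertex v are joined through a pair {b, h}
  with h an edge at the far end of b; a pair at v is joined in one step to a pair at each
  neighbour of v; and connectivity of G propagates this to all pairs. *)

lemma line_edges_iff:
  "{a, b} \<in> line_edges X \<longleftrightarrow> a \<in> X \<and> b \<in> X \<and> a \<noteq> b \<and> a \<inter> b \<noteq> {}"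
  by (auto simp: line_edges_def doubleton_eq_iff)

lemma line_edges_obtain_other:
  assumes "p \<in> line_edges X" "a \<in> p"
  obtains c where "p = {a, c}"
proof -
  obtain e f where "p = {e, f}"
    using assms(1) by (auto simp: line_edges_def)
  with assms(2) that show ?thesis
    by (metis insert_commute insertE singletonD)
qed

lemma triangles_line_edges_meet:
  assumes "T \<in> triangles (line_edges X)" "x \<in> T" "y \<in> T"
  shows "x \<inter> y \<noteq> {}"
proof -
  obtain a b c where "T = {a, b, c}"
    and "{a, b} \<in> line_edges X" "{b, c} \<in> line_edges X" "{a, c} \<in> line_edges X"
    using assms(1) unfolding triangles_def by blast
  with assms(2,3) show ?thesis
    unfolding line_edges_iff by blast
qed

lemma set_edges_intro: "x \<in> S \<Longrightarrow> y \<in> S \<Longrightarrow> x \<noteq> y \<Longrightarrow> {x, y} \<in> set_edges S"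
  unfolding set_edges_def by blast

lemma set_edges_mem: "p \<in> set_edges S \<Longrightarrow> x \<in> p \<Longrightarrow> x \<in> S"
  unfolding set_edges_def by blast

lemma mem_reduced_L2_edges:
  "q \<in> reduced_L2_edges X \<longleftrightarrow>
    q \<in> line_edges (line_edges X) \<and> (\<forall>T \<in> triangles (line_edges X). q \<notin> set_edges (set_edges T))"
  unfolding reduced_L2_edges_def by blast

lemma reduced_L2_edge_iff_disjoint:
  assumes ab: "{a, b} \<in> line_edges X" and bc: "{b, c} \<in> line_edges X"
  shows "{{a, b}, {b, c}} \<in> reduced_L2_edges X \<longleftrightarrow> a \<inter> c = {}"
proof
  assume reduced: "{{a, b}, {b, c}} \<in> reduced_L2_edges X"
  then have "{a, b} \<noteq> {b, c}"
    unfolding mem_reduced_L2_edges line_edges_iff by blast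
  then have "a \<noteq> c"
    by (metis insert_commute)
  show "a \<inter> c = {}"
  proof (rule ccontr)
    assume "a \<inter> c \<noteq> {}"
    with \<open>a \<noteq> c\<close> ab bc have "{a, c} \<in> line_edges X" "a \<noteq> b" "b \<noteq> c"
      unfolding line_edges_iff by blast+
    with \<open>a \<noteq> c\<close> ab bc have "{a, b, c} \<in> triangles (line_edges X)"
      unfolding triangles_def by blast
    moreover have "{{a, b}, {b, c}} \<in> set_edges (set_edges {a, b, c})"
      using \<open>{a, b} \<noteq> {b, c}\<close> \<open>a \<noteq> b\<close> \<open>b \<noteq> c\<close> \<open>a \<noteq> c\<close>
      by (intro set_edges_intro) auto
    ultimately show False
      using reduced unfolding mem_reduced_L2_edges by blast
  qed
next
  assume disjoint: "a \<inter> c = {}"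
  have "a \<noteq> b" "a \<noteq> {}"
    using ab unfolding line_edges_iff by auto
  with disjoint have "{a, b} \<noteq> {b, c}"
    by (metis doubleton_eq_iff inf.idem)
  with ab bc have "{{a, b}, {b, c}} \<in> line_edges (line_edges X)"
    unfolding line_edges_iff by blast
  moreover have "{{a, b}, {b, c}} \<notin> set_edges (set_edges T)"
    if "T \<in> triangles (line_edges X)" for T
  proof
    assume "{{a, b}, {b, c}} \<in> set_edges (set_edges T)"
    then have "{a, b} \<in> set_edges T" "{b, c} \<in> set_edges T"
      by (simp_all add: set_edges_mem)
    then have "a \<in> T" "c \<in> T"
      by (simp_all add: set_edges_mem)
    with that disjoint show False
      using triangles_line_edges_meet by blast
  qed
  ultimately show "{{a, b}, {b, c}} \<in> reduced_L2_edges X"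
    unfolding mem_reduced_L2_edges by blast
qed

definition path_extensions :: "'a set set \<Rightarrow> 'a set \<Rightarrow> 'a set \<Rightarrow> 'a set set" where
  "path_extensions X a b = {c \<in> X. c \<noteq> b \<and> b \<inter> c \<noteq> {} \<and> a \<inter> c = {}}"

lemma reduced_L2_edge_iff_path_extension:
  assumes "{a, b} \<in> line_edges X"
  shows "{{a, b}, {b, c}} \<in> reduced_L2_edges X \<longleftrightarrow> c \<in> path_extensions X a b"
proof
  assume reduced: "{{a, b}, {b, c}} \<in> reduced_L2_edges X"
  then have "{b, c} \<in> line_edges X"
    unfolding mem_reduced_L2_edges line_edges_iff by blast
  moreover have "a \<inter> c = {}"
    using reduced_L2_edge_iff_disjoint[OF assms calculation] reduced by blast
  ultimately show "c \<in> path_extensions X a b"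
    by (auto simp: path_extensions_def line_edges_iff)
next
  assume "c \<in> path_extensions X a b"
  then have "{b, c} \<in> line_edges X" "a \<inter> c = {}"
    using assms by (auto simp: path_extensions_def line_edges_iff)
  with assms show "{{a, b}, {b, c}} \<in> reduced_L2_edges X"
    using reduced_L2_edge_iff_disjoint by blast
qed

lemma reduced_L2_edges_at:
  assumes ab: "{a, b} \<in> line_edges X"
  shows "{q \<in> reduced_L2_edges X. {a, b} \<in> q} =
    (\<lambda>c. {{a, b}, {b, c}}) ` path_extensions X a b \<union>
    (\<lambda>c. {{a, b}, {a, c}}) ` path_extensions X b a"
    (is "?N = ?B \<union> ?A")
proof
  have ba: "{b, a} \<in> line_edges X"
    using ab by (simp add: insert_commute)
  have swap: "{{a, b}, {a, c}} = {{b, a}, {a, c}}" for c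
    by (simp add: insert_commute)
  show "?N \<subseteq> ?B \<union> ?A"
  proof
    fix q assume "q \<in> ?N"
    then have reduced: "q \<in> reduced_L2_edges X" and "{a, b} \<in> q" by auto
    then have "q \<in> line_edges (line_edges X)"
      by (simp add: mem_reduced_L2_edges)
    then obtain p where q: "q = {{a, b}, p}"
      using \<open>{a, b} \<in> q\<close> by (rule line_edges_obtain_other)
    then have p: "p \<in> line_edges X" "{a, b} \<inter> p \<noteq> {}"
      using \<open>q \<in> line_edges (line_edges X)\<close> by (simp_all add: line_edges_iff)
    then consider "b \<in> p" | "a \<in> p" by blast
    then show "q \<in> ?B \<union> ?A"
    proof cases
      case 1
      obtain c where "p = {b, c}"
        using p(1) \<open>b \<in> p\<close> by (rule line_edges_obtain_other)
      with reduced q have "c \<in> path_extensions X a b"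
        using reduced_L2_edge_iff_path_extension[OF ab] by simp
      with q \<open>p = {b, c}\<close> show ?thesis by blast
    next
      case 2
      obtain c where "p = {a, c}"
        using p(1) \<open>a \<in> p\<close> by (rule line_edges_obtain_other)
      with reduced q have "c \<in> path_extensions X b a"
        using reduced_L2_edge_iff_path_extension[OF ba] swap by simp
      with q \<open>p = {a, c}\<close> show ?thesis by blast
    qed
  qed
  show "?B \<union> ?A \<subseteq> ?N"
  proof
    fix q assume "q \<in> ?B \<union> ?A"
    then consider c where "c \<in> path_extensions X a b" "q = {{a, b}, {b, c}}"
      | c where "c \<in> path_extensions X b a" "q = {{a, b}, {a, c}}"
      by blast
    then show "q \<in> ?N"
    proof cases
      case 1
      then show ?thesis
        using reduced_L2_edge_iff_path_extension[OF ab] by simp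
    next
      case 2
      then have "q \<in> reduced_L2_edges X"
        using reduced_L2_edge_iff_path_extension[OF ba] swap by simp
      with 2 show ?thesis by simp
    qed
  qed
qed

lemma degree_reduced_L2:
  assumes ab: "{a, b} \<in> line_edges X" and "finite X"
  shows "degree (reduced_L2_edges X) {a, b} =
    card (path_extensions X a b) + card (path_extensions X b a)"
proof -
  have "b \<noteq> {}" "a \<noteq> b"
    using ab by (auto simp: line_edges_iff)
  have finite: "finite (path_extensions X a b)" "finite (path_extensions X b a)"
    using \<open>finite X\<close> by (simp_all add: path_extensions_def)
  have "inj_on (\<lambda>c. {{a, b}, {b, c}}) (path_extensions X a b)"
    by (rule inj_onI) (metis doubleton_eq_iff)
  moreover have "inj_on (\<lambda>c. {{a, b}, {a, c}}) (path_extensions X b a)"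
    by (rule inj_onI) (metis doubleton_eq_iff)
  moreover have "{{a, b}, {b, c}} \<noteq> {{a, b}, {a, c'}}" if "c' \<in> path_extensions X b a" for c c'
  proof
    assume "{{a, b}, {b, c}} = {{a, b}, {a, c'}}"
    then have "{b, c} = {a, c'}"
      by (metis doubleton_eq_iff)
    with \<open>a \<noteq> b\<close> have "c' = b"
      by (metis doubleton_eq_iff)
    with that \<open>b \<noteq> {}\<close> show False
      by (simp add: path_extensions_def)
  qed
  then have "(\<lambda>c. {{a, b}, {b, c}}) ` path_extensions X a b \<inter>
      (\<lambda>c. {{a, b}, {a, c}}) ` path_extensions X b a = {}"
    by blast
  ultimately show ?thesis
    unfolding degree_def reduced_L2_edges_at[OF ab]
    by (simp add: card_Un_disjoint card_image finite)
qed

definition star_pairs :: "'a set set \<Rightarrow> 'a \<Rightarrow> 'a set set set" where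
  "star_pairs E v = {{e, f} | e f. e \<in> E \<and> f \<in> E \<and> e \<noteq> f \<and> v \<in> e \<and> v \<in> f}"

lemma star_pairs_iff:
  "{e, f} \<in> star_pairs E v \<longleftrightarrow> e \<in> E \<and> f \<in> E \<and> e \<noteq> f \<and> v \<in> e \<and> v \<in> f"
  by (auto simp: star_pairs_def doubleton_eq_iff)

lemma star_pairs_subset_line_edges: "star_pairs E v \<subseteq> line_edges E"
  unfolding star_pairs_def line_edges_def by blast

lemma reachable_if_edge: "{p, q} \<in> R \<Longrightarrow> reachable R p q"
  unfolding reachable_def adj_def by (rule r_into_rtranclp)

lemma reachable_trans: "reachable R p q \<Longrightarrow> reachable R q r \<Longrightarrow> reachable R p r"
  unfolding reachable_def by (rule rtranclp_trans)

locale cubic_triangle_free_graph =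
  fixes V :: "'a set" and E :: "'a set set"
  assumes simple: "simple_graph V E"
    and triangle_free: "triangle_free E"
    and cubic: "regular 3 V E"
begin

lemma edge_subset: "e \<in> E \<Longrightarrow> e \<subseteq> V"
  and card_edge: "e \<in> E \<Longrightarrow> card e = 2"
  using simple by (simp_all add: simple_graph_def)

lemma finite_edges: "finite E"
proof -
  have "E \<subseteq> Pow V" and "finite V"
    using simple by (auto simp: simple_graph_def)
  then show ?thesis
    by (simp add: finite_subset)
qed

lemma edge_eq:
  assumes "e \<in> E" "x \<in> e" "y \<in> e" "x \<noteq> y"
  shows "e = {x, y}"
proof -
  have "card e = 2"
    using card_edge[OF assms(1)] .
  then have "finite e"
    by (simp add: card_ge_0_finite)
  moreover have "{x, y} \<subseteq> e" "card {x, y} = card e"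
    using assms(2-4) \<open>card e = 2\<close> by simp_all
  ultimately show ?thesis
    using card_subset_eq by metis
qed

lemma edge_obtain_other:
  assumes "e \<in> E" "v \<in> e"
  obtains w where "e = {v, w}" "w \<noteq> v" "w \<in> V"
proof -
  obtain x y where "e = {x, y}" "x \<noteq> y"
    using card_edge[OF assms(1)] by (auto simp: card_2_iff)
  then obtain w where "w \<in> e" "w \<noteq> v"
    by blast
  with assms that show ?thesis
    using edge_eq edge_subset by blast
qed

lemma no_triangle:
  assumes "{x, y} \<in> E" "{y, z} \<in> E" "{x, z} \<in> E" "x \<noteq> y" "y \<noteq> z" "x \<noteq> z"
  shows False
  using assms triangle_free unfolding triangle_free_def triangles_def by blast

lemma card_edges_at: "v \<in> V \<Longrightarrow> card {e \<in> E. v \<in> e} = 3"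
  using cubic by (simp add: regular_def degree_def)

lemma obtain_edge_at:
  assumes "v \<in> V"
  obtains e where "e \<in> E" "v \<in> e" "e \<noteq> f"
proof -
  have "\<not> {e \<in> E. v \<in> e} \<subseteq> {f}"
    using card_mono[of "{f}" "{e \<in> E. v \<in> e}"] card_edges_at[OF assms] by auto
  with that show ?thesis by blast
qed

lemma path_extensions_eq:
  assumes a: "a \<in> E" "v \<in> a" "a \<noteq> {v, w}" and b: "{v, w} \<in> E"
  shows "path_extensions E a {v, w} = {c \<in> E. w \<in> c} - {{v, w}}"
proof (intro set_eqI iffI)
  fix c assume "c \<in> path_extensions E a {v, w}"
  with a show "c \<in> {c \<in> E. w \<in> c} - {{v, w}}"
    by (auto simp: path_extensions_def)
next
  fix c assume c: "c \<in> {c \<in> E. w \<in> c} - {{v, w}}"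
  have "v \<noteq> w"
    using card_edge[OF b] by auto
  with c have "v \<notin> c"
    using edge_eq by blast
  obtain u where u: "a = {v, u}" "u \<noteq> v"
    using a edge_obtain_other by metis
  have "u \<notin> c"
  proof
    assume "u \<in> c"
    moreover have "u \<noteq> w"
      using a u by auto
    ultimately have "{w, u} \<in> E"
      using c edge_eq by auto
    with a b u \<open>u \<noteq> w\<close> \<open>v \<noteq> w\<close> show False
      using no_triangle by metis
  qed
  with c u \<open>v \<notin> c\<close> show "c \<in> path_extensions E a {v, w}"
    by (auto simp: path_extensions_def)
qed

lemma card_path_extensions:
  assumes "{a, b} \<in> line_edges E"
  shows "card (path_extensions E a b) = 2"
proof -
  have "a \<in> E" "b \<in> E" "a \<noteq> b" and "a \<inter> b \<noteq> {}"
    using assms by (simp_all add: line_edges_iff)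
  then obtain v where "v \<in> a" "v \<in> b" by blast
  then obtain w where b: "b = {v, w}" "w \<in> V"
    using \<open>b \<in> E\<close> edge_obtain_other by metis
  have "finite {c \<in> E. w \<in> c}"
    using finite_edges by simp
  with b \<open>a \<in> E\<close> \<open>v \<in> a\<close> \<open>a \<noteq> b\<close> \<open>b \<in> E\<close> show ?thesis
    by (simp add: path_extensions_eq card_Diff_singleton card_edges_at)
qed

lemma regular_reduced_L2: "regular 4 (line_edges E) (reduced_L2_edges E)"
  unfolding regular_def
proof
  fix p assume "p \<in> line_edges E"
  moreover obtain a b where p: "p = {a, b}"
    using calculation unfolding line_edges_def by blast
  ultimately have "{a, b} \<in> line_edges E" "{b, a} \<in> line_edges E"
    by (simp_all add: insert_commute)
  with p show "degree (reduced_L2_edges E) p = 4"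
    by (simp add: degree_reduced_L2 finite_edges card_path_extensions)
qed

lemma reachable_turn:
  assumes "a \<in> E" "b \<in> E" "c \<in> E" "v \<in> a" "v \<in> b" "v \<in> c" "a \<noteq> b" "b \<noteq> c"
  shows "reachable (reduced_L2_edges E) {a, b} {b, c}"
proof -
  obtain w where b: "b = {v, w}"
    using \<open>b \<in> E\<close> \<open>v \<in> b\<close> edge_obtain_other by metis
  have ab: "{a, b} \<in> line_edges E" and cb: "{c, b} \<in> line_edges E"
    using assms by (auto simp: line_edges_iff)
  have "card (path_extensions E a b) = 2"
    using card_path_extensions[OF ab] .
  then obtain h where h: "h \<in> path_extensions E a b"
    by fastforce
  have "path_extensions E c b = path_extensions E a b"
    using path_extensions_eq[of a v w] path_extensions_eq[of c v w] assms b by simp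
  with h have "{{a, b}, {b, h}} \<in> reduced_L2_edges E" "{{c, b}, {b, h}} \<in> reduced_L2_edges E"
    using reduced_L2_edge_iff_path_extension[OF ab] reduced_L2_edge_iff_path_extension[OF cb]
    by simp_all
  then have "reachable (reduced_L2_edges E) {a, b} {b, h}"
    "reachable (reduced_L2_edges E) {b, h} {b, c}"
    by (simp_all add: reachable_if_edge insert_commute)
  then show ?thesis
    by (rule reachable_trans)
qed

lemma star_pairs_meet:
  assumes "v \<in> V" "p \<in> star_pairs E v" "p' \<in> star_pairs E v"
  shows "p \<inter> p' \<noteq> {}"
proof
  assume disjoint: "p \<inter> p' = {}"
  obtain a b c d where p: "p = {a, b}" and p': "p' = {c, d}"
    using assms(2,3) unfolding star_pairs_def by blast
  with assms(2,3) have "a \<noteq> b" "c \<noteq> d" and star: "p \<union> p' \<subseteq> {e \<in> E. v \<in> e}"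
    by (simp_all add: star_pairs_iff)
  have "finite {e \<in> E. v \<in> e}"
    using finite_edges by simp
  then have "card (p \<union> p') \<le> 3"
    using card_mono[OF _ star] card_edges_at[OF \<open>v \<in> V\<close>] by simp
  moreover have "card (p \<union> p') = 4"
    using disjoint p p' \<open>a \<noteq> b\<close> \<open>c \<noteq> d\<close> by (simp add: card_Un_disjoint)
  ultimately show False by simp
qed

lemma reachable_within_star:
  assumes "v \<in> V" "p \<in> star_pairs E v" "p' \<in> star_pairs E v"
  shows "reachable (reduced_L2_edges E) p p'"
proof -
  obtain x where "x \<in> p" "x \<in> p'"
    using star_pairs_meet[OF assms] by blast
  have "p \<in> line_edges E" "p' \<in> line_edges E"
    using assms(2,3) by (simp_all add: subsetD[OF star_pairs_subset_line_edges])
  then obtain y z where p: "p = {x, y}" and p': "p' = {x, z}"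
    using \<open>x \<in> p\<close> \<open>x \<in> p'\<close> line_edges_obtain_other by metis
  then have "y \<in> E" "x \<in> E" "z \<in> E" "v \<in> y" "v \<in> x" "v \<in> z" "y \<noteq> x" "x \<noteq> z"
    using assms(2,3) by (auto simp: star_pairs_iff insert_commute[of x y])
  then have "reachable (reduced_L2_edges E) {y, x} {x, z}"
    by (rule reachable_turn)
  with p p' show ?thesis
    by (simp add: insert_commute)
qed

lemma reachable_across_edge:
  assumes f: "{v, w} \<in> E"
  obtains p p' where "p \<in> star_pairs E v" "p' \<in> star_pairs E w"
    "reachable (reduced_L2_edges E) p p'"
proof -
  have "v \<noteq> w"
    using card_edge[OF f] by auto
  have "v \<in> V"
    using edge_subset[OF f] by simp
  then obtain e where e: "e \<in> E" "v \<in> e" "e \<noteq> {v, w}"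
    by (rule obtain_edge_at)
  then have ef: "{e, {v, w}} \<in> line_edges E"
    using f unfolding line_edges_iff by blast
  then have "card (path_extensions E e {v, w}) = 2"
    by (rule card_path_extensions)
  then obtain h where h: "h \<in> path_extensions E e {v, w}"
    by fastforce
  then have "h \<in> E" "w \<in> h" "h \<noteq> {v, w}"
    using path_extensions_eq[OF e f] by simp_all
  with e f \<open>v \<noteq> w\<close> have "{e, {v, w}} \<in> star_pairs E v" "{{v, w}, h} \<in> star_pairs E w"
    by (simp_all add: star_pairs_iff)
  moreover have "reachable (reduced_L2_edges E) {e, {v, w}} {{v, w}, h}"
    using h reduced_L2_edge_iff_path_extension[OF ef] by (simp add: reachable_if_edge)
  ultimately show ?thesis
    by (rule that)
qed

lemma reachable_between_stars:
  assumes "(adj E)\<^sup>*\<^sup>* v w" "v \<in> V" "p \<in> star_pairs E v" "p' \<in> star_pairs E w"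
  shows "reachable (reduced_L2_edges E) p p'"
  using assms(1,4)
proof (induction arbitrary: p' rule: rtranclp_induct)
  case base
  then show ?case
    using reachable_within_star assms(2,3) by blast
next
  case (step u w)
  then have "{u, w} \<in> E"
    by (simp add: adj_def)
  then obtain q q' where "q \<in> star_pairs E u" "q' \<in> star_pairs E w"
    "reachable (reduced_L2_edges E) q q'"
    by (rule reachable_across_edge)
  moreover have "w \<in> V"
    using edge_subset[OF \<open>{u, w} \<in> E\<close>] by simp
  ultimately show ?case
    using step reachable_within_star reachable_trans by meson
qed

lemma line_edges_in_star_pairs:
  assumes "p \<in> line_edges E"
  obtains v where "v \<in> V" "p \<in> star_pairs E v"
proof -
  obtain e f where "p = {e, f}" "e \<in> E" "f \<in> E" "e \<noteq> f" "e \<inter> f \<noteq> {}"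
    using assms unfolding line_edges_def by blast
  moreover obtain v where "v \<in> e" "v \<in> f"
    using calculation by blast
  moreover have "v \<in> V"
    using calculation edge_subset by blast
  ultimately show ?thesis
    using that by (simp add: star_pairs_iff)
qed

lemma connected_reduced_L2:
  assumes "connected_graph V E"
  shows "connected_graph (line_edges E) (reduced_L2_edges E)"
proof -
  obtain v where "v \<in> V"
    using assms unfolding connected_graph_def by blast
  then obtain e f where "e \<in> E" "v \<in> e" "f \<in> E" "v \<in> f" "e \<noteq> f"
    by (metis obtain_edge_at)
  then have "{e, f} \<in> line_edges E"
    by (auto simp: line_edges_iff)
  moreover have "reachable (reduced_L2_edges E) p p'"
    if "p \<in> line_edges E" "p' \<in> line_edges E" for p p'
  proof -
    obtain u where "u \<in> V" "p \<in> star_pairs E u"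
      using \<open>p \<in> line_edges E\<close> by (rule line_edges_in_star_pairs)
    moreover obtain u' where "u' \<in> V" "p' \<in> star_pairs E u'"
      using \<open>p' \<in> line_edges E\<close> by (rule line_edges_in_star_pairs)
    moreover have "(adj E)\<^sup>*\<^sup>* u u'"
      using assms calculation unfolding connected_graph_def reachable_def by blast
    ultimately show ?thesis
      using reachable_between_stars by blast
  qed
  ultimately show ?thesis
    unfolding connected_graph_def by blast
qed

end

theorem proposition2p1:
  fixes V :: "'a set" and E :: "'a set set"
  assumes "simple_graph V E"
    and "connected_graph V E"
    and "bridgeless V E"
    and "triangle_free E"
    and "regular 3 V E"
  shows "regular 4 (reduced_L2_vertices E) (reduced_L2_edges E)
       \<and> connected_graph (reduced_L2_vertices E) (reduced_L2_edges E)"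
proof -
  interpret cubic_triangle_free_graph V E
    using assms by (simp add: cubic_triangle_free_graph_def)
  show ?thesis
    unfolding reduced_L2_vertices_def
    using regular_reduced_L2 connected_reduced_L2[OF assms(2)] by blast
qed

end
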